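(* $\alpha(n)\ge (1+o(1))\dfrac{54}{n^3}$ as $n\to\infty$, where \[ \alpha(n)=\min\{\lambda_1(G): G\text{ simple connected on } n\text{ vertices}\}. \]
   Context: $\lambda_1(G)$ denotes the second smallest eigenvalue of the normalized Laplacian $\mathcal{L}=I-T^{-1/2}AT^{-1/2}$, where $A$ is the adjacency matrix and $T$ the diagonal degree matrix. *)

theory Defs
  imports Complex_Main "Jordan_Normal_Form.Char_Poly"
begin

definition simple_graph :: "nat \<Rightarrow> (nat \<Rightarrow> nat \<Rightarrow> bool) \<Rightarrow> bool" where
  "simple_graph n E \<longleftrightarrow>
     (\<forall>i j. E i j \<longrightarrow> i < n \<and> j < n) \<and> (\<forall>i j. E i j \<longleftrightarrow> E j i) \<and> (\<forall>i. \<not> E i i)"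

definition connected_graph :: "nat \<Rightarrow> (nat \<Rightarrow> nat \<Rightarrow> bool) \<Rightarrow> bool" where
  "connected_graph n E \<longleftrightarrow> (\<forall>i<n. \<forall>j<n. E\<^sup>*\<^sup>* i j)"

definition adj_matrix :: "nat \<Rightarrow> (nat \<Rightarrow> nat \<Rightarrow> bool) \<Rightarrow> real mat" where
  "adj_matrix n E = mat n n (\<lambda>(i,j). if E i j then 1 else 0)"

definition degree :: "nat \<Rightarrow> (nat \<Rightarrow> nat \<Rightarrow> bool) \<Rightarrow> nat \<Rightarrow> real" where
  "degree n E i = (\<Sum>j<n. if E i j then 1 else 0)"

definition deg_inv_sqrt :: "nat \<Rightarrow> (nat \<Rightarrow> nat \<Rightarrow> bool) \<Rightarrow> real mat" where
  "deg_inv_sqrt n E = mat n n (\<lambda>(i,j). if i = j then 1 / sqrt (degree n E i) else 0)"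

definition norm_laplacian :: "nat \<Rightarrow> (nat \<Rightarrow> nat \<Rightarrow> bool) \<Rightarrow> real mat" where
  "norm_laplacian n E = 1\<^sub>m n - deg_inv_sqrt n E * adj_matrix n E * deg_inv_sqrt n E"

text \<open>Eigenvalues (with multiplicity) in increasing order: lambda_0 \<le> lambda_1 \<le> ...;
  lambda_1 is the second smallest.\<close>
definition lambda1 :: "nat \<Rightarrow> (nat \<Rightarrow> nat \<Rightarrow> bool) \<Rightarrow> real" where
  "lambda1 n E = sorted_list_of_multiset (proots (char_poly (norm_laplacian n E))) ! 1"

definition alpha :: "nat \<Rightarrow> real" where
  "alpha n = Inf {lambda1 n E | E. simple_graph n E \<and> connected_graph n E}"

end

theory Submission
  imports Defs "Jordan_Normal_Form.Schur_Decomposition" "HOL-Real_Asymp.Real_Asymp"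
begin

text \<open>By the variational characterisation of \<open>\<lambda>\<^sub>1\<close> it suffices to show
  \<open>B \<Sum> d\<^sub>i f\<^sub>i\<^sup>2 \<le> \<Sum>\<^bsub>ij\<in>E\<^esub> (f\<^sub>i - f\<^sub>j)\<^sup>2\<close> whenever \<open>\<Sum> d\<^sub>i f\<^sub>i = 0\<close>, for some
  \<open>B = (1 + o(1)) 54 / n\<^sup>3\<close>. Let \<open>R = max f - min f\<close> and let \<open>L\<close> be the length of a shortest
  path between a maximum and a minimum of \<open>f\<close>; by Cauchy-Schwarz \<open>R\<^sup>2 \<le> L \<cdot> energy f\<close>,
  and trivially \<open>\<Sum> d\<^sub>i f\<^sub>i\<^sup>2 \<le> R\<^sup>2 n\<^sup>2\<close>. If \<open>energy f \<ge> \<epsilon>\<^sup>2 R\<^sup>2\<close> we are done. Otherwise the level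
  sets \<open>{f > \<epsilon>R}\<close> and \<open>{f < -\<epsilon>R}\<close> are at distance at least 3, and no vertex has more than
  three neighbours on a shortest path, so their volumes are at most \<open>a\<^sup>2 + O(n)\<close> and
  \<open>b\<^sup>2 + O(n)\<close> with \<open>a + b + L < n\<close>. Since \<open>f\<close> has mean zero, each level set carries the whole
  positive mass of \<open>f\<close>, which yields
  \<open>\<Sum> d\<^sub>i f\<^sub>i\<^sup>2 \<le> R\<^sup>2 (\<epsilon>n\<^sup>2 + (n - L + O(\<surd>n))\<^sup>2 / 8) \<le> energy f \<cdot> (\<epsilon>n\<^sup>3 + L (n - L + O(\<surd>n))\<^sup>2 / 8)\<close>;
  finally \<open>L (n - L)\<^sup>2 \<le> 4n\<^sup>3/27\<close>.\<close>

section \<open>Real symmetric matrices\<close>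

lemma mult_mat_vec_nth_sum:
  assumes "A \<in> carrier_mat n n" "v \<in> carrier_vec n" "i < n"
  shows "(A *\<^sub>v v) $ i = (\<Sum>j<n. A $$ (i,j) * v $ j)"
  using assms by (auto simp: scalar_prod_def atLeast0LessThan intro!: sum.cong)

lemma mult_mat_nth_sum:
  assumes "A \<in> carrier_mat n n" "B \<in> carrier_mat n n" "i < n" "j < n"
  shows "(A * B) $$ (i,j) = (\<Sum>k<n. A $$ (i,k) * B $$ (k,j))"
  using assms by (auto simp: scalar_prod_def atLeast0LessThan intro!: sum.cong)

lemma sum_sym_mat_swap:
  fixes N :: "real mat"
  assumes sym: "\<And>i j. i < n \<Longrightarrow> j < n \<Longrightarrow> N $$ (i,j) = N $$ (j,i)"
  shows "(\<Sum>i<n. u i * (\<Sum>j<n. N $$ (i,j) * v j)) = (\<Sum>j<n. v j * (\<Sum>i<n. N $$ (j,i) * u i))"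
proof -
  have "(\<Sum>i<n. u i * (\<Sum>j<n. N $$ (i,j) * v j)) = (\<Sum>i<n. \<Sum>j<n. u i * N $$ (i,j) * v j)"
    by (simp add: sum_distrib_left mult_ac)
  also have "\<dots> = (\<Sum>j<n. \<Sum>i<n. u i * N $$ (i,j) * v j)" by (rule sum.swap)
  also have "\<dots> = (\<Sum>j<n. v j * (\<Sum>i<n. N $$ (j,i) * u i))"
    using sym by (simp add: sum_distrib_left mult_ac)
  finally show ?thesis .
qed

lemma real_sym_char_poly_root_real:
  fixes N :: "real mat"
  assumes N: "N \<in> carrier_mat n n" and sym: "\<And>i j. i < n \<Longrightarrow> j < n \<Longrightarrow> N $$ (i,j) = N $$ (j,i)"
    and root: "poly (char_poly (map_mat complex_of_real N)) z = 0"
  shows "z \<in> \<real>"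
proof -
  let ?Nc = "map_mat complex_of_real N"
  have Nc: "?Nc \<in> carrier_mat n n" using N by auto
  from root eigenvalue_root_char_poly[OF Nc] have "eigenvalue ?Nc z" by simp
  then obtain v where "eigenvector ?Nc v z" unfolding eigenvalue_def by auto
  hence v: "v \<in> carrier_vec n" and v0: "v \<noteq> 0\<^sub>v n" and eq: "?Nc *\<^sub>v v = z \<cdot>\<^sub>v v"
    using N unfolding eigenvector_def by auto
  define S where "S = (\<Sum>i<n. cnj (v $ i) * (\<Sum>j<n. complex_of_real (N $$ (i,j)) * v $ j))"
  define T where "T = (\<Sum>i<n. cnj (v $ i) * v $ i)"
  have "S = (\<Sum>i<n. cnj (v $ i) * (?Nc *\<^sub>v v) $ i)"
    unfolding S_def using N v by (intro sum.cong refl, subst mult_mat_vec_nth_sum[OF Nc v]) auto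
  also have "\<dots> = z * T" unfolding eq T_def using v
    by (auto simp: sum_distrib_left intro!: sum.cong)
  finally have SzT: "S = z * T" .
  have "cnj S = (\<Sum>i<n. \<Sum>j<n. v $ i * complex_of_real (N $$ (i,j)) * cnj (v $ j))"
    unfolding S_def by (simp add: sum_distrib_left mult_ac)
  also have "\<dots> = (\<Sum>j<n. \<Sum>i<n. v $ i * complex_of_real (N $$ (i,j)) * cnj (v $ j))"
    by (rule sum.swap)
  also have "\<dots> = S" unfolding S_def using sym
    by (auto simp: sum_distrib_left mult_ac intro!: sum.cong)
  finally have S_real: "cnj S = S" .
  have T_eq: "T = complex_of_real (\<Sum>i<n. (cmod (v $ i))^2)"
    unfolding T_def of_real_sum
    by (rule sum.cong[OF refl]) (metis complex_norm_square mult.commute of_real_power)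
  obtain i where i: "i < n" "v $ i \<noteq> 0"
    using v v0 by (metis eq_vecI carrier_vecD index_zero_vec(1) index_zero_vec(2))
  have "(\<Sum>i<n. (cmod (v $ i))^2) > 0"
    by (rule sum_pos2[of _ i]) (use i in auto)
  hence T_real: "T \<noteq> 0" "cnj T = T"
    by (simp_all only: T_eq complex_cnj_complex_of_real)
      (metis Re_complex_of_real less_irrefl zero_complex.sel(1))
  from S_real SzT have "cnj z * cnj T = z * T" by simp
  with T_real have "cnj z = z" by simp
  thus ?thesis using Reals_cnj_iff by blast
qed

lemma real_sym_char_poly_splits:
  fixes N :: "real mat"
  assumes N: "N \<in> carrier_mat n n" and sym: "\<And>i j. i < n \<Longrightarrow> j < n \<Longrightarrow> N $$ (i,j) = N $$ (j,i)"
  obtains rs where "char_poly N = (\<Prod>r\<leftarrow>rs. [:- r, 1:])"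
proof -
  let ?Nc = "map_mat complex_of_real N"
  have Nc: "?Nc \<in> carrier_mat n n" using N by auto
  obtain zs where zs: "char_poly ?Nc = (\<Prod>a\<leftarrow>zs. [:- a, 1:])"
    using char_poly_factorized[OF Nc] by blast
  have real: "z \<in> \<real>" if "z \<in> set zs" for z
  proof (rule real_sym_char_poly_root_real[OF N sym])
    show "poly (char_poly ?Nc) z = 0" unfolding zs using that
      by (auto simp: poly_prod_list prod_list_zero_iff)
  qed
  interpret of_real: map_poly_inj_comm_ring_hom "complex_of_real" ..
  have "map_poly complex_of_real (\<Prod>r\<leftarrow>map Re zs. [:- r, 1:]) = (\<Prod>a\<leftarrow>zs. [:- a, 1:])"
    using real
  proof (induction zs)
    case (Cons a zs)
    hence "map_poly complex_of_real [:- Re a, 1:] = [:- a, 1:]" by simp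
    with Cons show ?case by (simp only: list.map prod_list.Cons of_real.hom_mult) simp
  qed simp
  also have "\<dots> = map_poly complex_of_real (char_poly N)"
    by (metis zs of_real_hom.char_poly_hom[OF N])
  finally show ?thesis using that[of "map Re zs"] by (simp only: of_real.eq_iff)
qed

lemma proots_prod_linear: "proots (\<Prod>r\<leftarrow>rs. [:- r, 1:]) = mset (rs :: real list)"
proof (induction rs)
  case (Cons a rs)
  have "proots ([:- a, 1:] * (\<Prod>r\<leftarrow>rs. [:- r, 1:])) = proots [:- a, 1:] + proots (\<Prod>r\<leftarrow>rs. [:- r, 1:])"
    by (rule proots_mult) (auto simp: prod_list_zero_iff)
  thus ?case using Cons by simp
qed simp

lemma triangular_first_two_columns:
  fixes N :: "real mat"
  assumes N: "N \<in> carrier_mat n n" and cp: "char_poly N = (\<Prod>r\<leftarrow>es. [:- r, 1:])" and n2: "2 \<le> n"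
  obtains p0 p1 t where
    "\<And>i. i < n \<Longrightarrow> (\<Sum>j<n. N $$ (i,j) * p0 j) = es ! 0 * p0 i"
    "\<And>i. i < n \<Longrightarrow> (\<Sum>j<n. N $$ (i,j) * p1 j) = t * p0 i + es ! 1 * p1 i"
    "\<And>a b. (\<And>k. k < n \<Longrightarrow> a * p0 k + b * p1 k = 0) \<Longrightarrow> a = 0 \<and> b = 0"
proof -
  obtain T P Q where sd: "schur_decomposition N es = (T,P,Q)" by (cases "schur_decomposition N es") auto
  from schur_decomposition[OF N cp sd] have sim: "similar_mat_wit N T P Q"
    and ut: "upper_triangular T" and dg: "diag_mat T = es" by auto
  from similar_mat_witD2[OF N sim] have QP: "Q * P = 1\<^sub>m n" and NPTQ: "N = P * T * Q"
    and T: "T \<in> carrier_mat n n" and P: "P \<in> carrier_mat n n" and Q: "Q \<in> carrier_mat n n" by auto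
  have NP: "N * P = P * T"
  proof -
    have "N * P = P * T * (Q * P)" using NPTQ P T Q by (simp add: assoc_mult_mat[of _ n n _ n _ n])
    thus ?thesis using QP P T by simp
  qed
  have T_diag: "T $$ (0,0) = es ! 0" "T $$ (1,1) = es ! 1"
    using dg n2 T unfolding diag_mat_def by (auto dest: arg_cong[of _ _ "\<lambda>xs. xs ! 0"] arg_cong[of _ _ "\<lambda>xs. xs ! 1"])
  have T_lower: "T $$ (k,j) = 0" if "j < k" "k < n" for k j
    using ut that T unfolding upper_triangular_def by auto
  have NP_col: "(\<Sum>j<n. N $$ (i,j) * P $$ (j,c)) = (\<Sum>k\<in>{..c}. P $$ (i,k) * T $$ (k,c))"
    if "i < n" "c < n" for i c
  proof -
    have "(\<Sum>j<n. N $$ (i,j) * P $$ (j,c)) = (P * T) $$ (i,c)"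
      using mult_mat_nth_sum[OF N P that] by (simp add: NP)
    also have "\<dots> = (\<Sum>k<n. P $$ (i,k) * T $$ (k,c))" using mult_mat_nth_sum[OF P T that] .
    also have "\<dots> = (\<Sum>k\<in>{..c}. P $$ (i,k) * T $$ (k,c))"
      by (rule sum.mono_neutral_right) (use that T_lower in auto)
    finally show ?thesis .
  qed
  show ?thesis
  proof (rule that[of "\<lambda>k. P $$ (k,0)" "\<lambda>k. P $$ (k,1)" "T $$ (0,1)"])
    show "(\<Sum>j<n. N $$ (i,j) * P $$ (j,0)) = es ! 0 * P $$ (i,0)" if "i < n" for i
      using NP_col[OF that, of 0] n2 T_diag by simp
    show "(\<Sum>j<n. N $$ (i,j) * P $$ (j,1)) = T $$ (0,1) * P $$ (i,0) + es ! 1 * P $$ (i,1)" if "i < n" for i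
      using NP_col[OF that, of 1] n2 T_diag by (simp add: atMost_Suc)
    fix a b assume ab: "\<And>k. k < n \<Longrightarrow> a * P $$ (k,0) + b * P $$ (k,1) = 0"
    have combination: "(\<Sum>k<n. Q $$ (i,k) * (a * P $$ (k,0) + b * P $$ (k,1))) =
        (if i = 0 then a else 0) + (if i = 1 then b else 0)" if "i < n" for i
    proof -
      have "(\<Sum>k<n. Q $$ (i,k) * P $$ (k,j)) = (if i = j then 1 else 0)" if "j < n" for j
        using mult_mat_nth_sum[OF Q P \<open>i < n\<close> that] QP that \<open>i < n\<close> by simp
      moreover have "(\<Sum>k<n. Q $$ (i,k) * (a * P $$ (k,0) + b * P $$ (k,1))) =
          a * (\<Sum>k<n. Q $$ (i,k) * P $$ (k,0)) + b * (\<Sum>k<n. Q $$ (i,k) * P $$ (k,1))"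
        by (simp add: algebra_simps sum.distrib sum_distrib_left)
      ultimately show ?thesis using n2 by simp
    qed
    have "(\<Sum>k<n. Q $$ (i,k) * (a * P $$ (k,0) + b * P $$ (k,1))) = 0" for i using ab by simp
    from this[of 0] this[of 1] combination[of 0] combination[of 1] n2 show "a = 0 \<and> b = 0" by simp
  qed
qed

locale spectral_gap =
  fixes N :: "real mat" and n :: nat and w :: "nat \<Rightarrow> real" and B :: real
  assumes carrier: "N \<in> carrier_mat n n"
    and sym: "\<And>i j. i < n \<Longrightarrow> j < n \<Longrightarrow> N $$ (i,j) = N $$ (j,i)"
    and kernel_vector: "\<And>i. i < n \<Longrightarrow> (\<Sum>j<n. N $$ (i,j) * w j) = 0"
    and rayleigh: "\<And>g. (\<Sum>i<n. w i * g i) = 0 \<Longrightarrow>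
                 B * (\<Sum>i<n. (g i)^2) \<le> (\<Sum>i<n. g i * (\<Sum>j<n. N $$ (i,j) * g j))"
    and gap_pos: "B > 0"
begin

lemma kernel_parallel:
  assumes v0: "\<And>i. i < n \<Longrightarrow> (\<Sum>j<n. N $$ (i,j) * v j) = 0"
  obtains c where "\<And>i. i < n \<Longrightarrow> v i = c * w i"
proof -
  define c where "c = (\<Sum>i<n. w i * v i) / (\<Sum>i<n. (w i)^2)"
  define h where "h i = v i - c * w i" for i
  have "(\<Sum>i<n. w i * h i) = 0"
  proof (cases "(\<Sum>i<n. (w i)^2) = 0")
    case True
    hence "\<forall>i\<in>{..<n}. (w i)^2 = 0" by (subst sum_nonneg_eq_0_iff[symmetric]) auto
    thus ?thesis by simp
  next
    case False
    have "(\<Sum>i<n. w i * h i) = (\<Sum>i<n. w i * v i) - c * (\<Sum>i<n. (w i)^2)"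
      unfolding h_def by (simp add: algebra_simps sum_subtractf sum_distrib_left power2_eq_square)
    thus ?thesis unfolding c_def using False by simp
  qed
  moreover have "(\<Sum>j<n. N $$ (i,j) * h j) = 0" if "i < n" for i
  proof -
    have "(\<Sum>j<n. N $$ (i,j) * h j) = (\<Sum>j<n. N $$ (i,j) * v j) - c * (\<Sum>j<n. N $$ (i,j) * w j)"
      unfolding h_def by (simp add: algebra_simps sum_subtractf sum_distrib_left)
    thus ?thesis using v0[OF that] kernel_vector[OF that] by simp
  qed
  ultimately have "B * (\<Sum>i<n. (h i)^2) \<le> 0" using rayleigh by fastforce
  hence "(\<Sum>i<n. (h i)^2) = 0" using gap_pos by (simp add: mult_le_0_iff order_antisym sum_nonneg)
  hence "\<forall>i\<in>{..<n}. (h i)^2 = 0" by (subst sum_nonneg_eq_0_iff[symmetric]) auto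
  thus ?thesis using that unfolding h_def by auto
qed

lemma eigenvalue_below_gap_zero:
  assumes ev: "\<And>i. i < n \<Longrightarrow> (\<Sum>j<n. N $$ (i,j) * v j) = \<mu> * v i"
    and nz: "i0 < n" "v i0 \<noteq> 0" and small: "\<mu> < B"
  shows "\<mu> = 0"
proof (rule ccontr)
  assume "\<mu> \<noteq> 0"
  have "\<mu> * (\<Sum>i<n. w i * v i) = (\<Sum>i<n. w i * (\<Sum>j<n. N $$ (i,j) * v j))"
    using ev by (simp add: sum_distrib_left mult_ac)
  also have "\<dots> = (\<Sum>j<n. v j * (\<Sum>i<n. N $$ (j,i) * w i))" by (rule sum_sym_mat_swap[OF sym])
  also have "\<dots> = 0" using kernel_vector by simp
  finally have "(\<Sum>i<n. w i * v i) = 0" using \<open>\<mu> \<noteq> 0\<close> by simp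
  hence "B * (\<Sum>i<n. (v i)^2) \<le> (\<Sum>i<n. v i * (\<Sum>j<n. N $$ (i,j) * v j))" by (rule rayleigh)
  also have "\<dots> = \<mu> * (\<Sum>i<n. (v i)^2)" using ev by (simp add: sum_distrib_left power2_eq_square mult_ac)
  finally have "B * (\<Sum>i<n. (v i)^2) \<le> \<mu> * (\<Sum>i<n. (v i)^2)" .
  moreover have "(\<Sum>i<n. (v i)^2) > 0" by (rule sum_pos2[of _ i0]) (use nz in auto)
  ultimately show False using small by simp
qed

text \<open>If \<open>\<lambda>\<^sub>1 < B\<close>, then \<open>\<lambda>\<^sub>0 = 0\<close> and the invariant plane of the triangularisation
  would contain a second null vector, or an eigenvector with eigenvalue in \<open>(0, B)\<close>.\<close>

theorem second_eigenvalue_ge_gap: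
  assumes n2: "2 \<le> n"
  shows "B \<le> sorted_list_of_multiset (proots (char_poly N)) ! 1"
proof -
  obtain rs where rs: "char_poly N = (\<Prod>r\<leftarrow>rs. [:- r, 1:])"
    using real_sym_char_poly_splits[OF carrier sym] by blast
  define es where "es = sort rs"
  have "prod_list (map f (sort rs)) = prod_list (map f rs)" for f :: "real \<Rightarrow> real poly"
    by (metis mset_map mset_sort prod_mset_prod_list)
  hence cp: "char_poly N = (\<Prod>r\<leftarrow>es. [:- r, 1:])" unfolding es_def rs by simp
  have sorted_roots: "sorted_list_of_multiset (proots (char_poly N)) = es"
    unfolding rs proots_prod_linear es_def by simp
  have "length es = n" using degree_monic_char_poly[OF carrier] degree_linear_factors[of uminus es] cp by simp
  hence es_mono: "es ! 0 \<le> es ! 1" using n2 unfolding es_def by (intro sorted_nth_mono) auto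
  obtain p0 p1 t where
    E0: "\<And>i. i < n \<Longrightarrow> (\<Sum>j<n. N $$ (i,j) * p0 j) = es ! 0 * p0 i" and
    E1: "\<And>i. i < n \<Longrightarrow> (\<Sum>j<n. N $$ (i,j) * p1 j) = t * p0 i + es ! 1 * p1 i" and
    indep: "\<And>a b. (\<And>k. k < n \<Longrightarrow> a * p0 k + b * p1 k = 0) \<Longrightarrow> a = 0 \<and> b = 0"
    using triangular_first_two_columns[OF carrier cp n2] by blast
  show ?thesis
  proof (rule ccontr)
    assume "\<not> ?thesis"
    hence small: "es ! 1 < B" unfolding sorted_roots by simp
    obtain k0 where k0: "k0 < n" "p0 k0 \<noteq> 0" using indep[of 1 0] by force
    have "es ! 0 = 0" using eigenvalue_below_gap_zero[OF E0 k0] es_mono small by simp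
    hence N0: "(\<Sum>j<n. N $$ (i,j) * p0 j) = 0" if "i < n" for i using E0[OF that] by simp
    obtain c0 where c0: "\<And>i. i < n \<Longrightarrow> p0 i = c0 * w i" using kernel_parallel[OF N0] by blast
    show False
    proof (cases "es ! 1 = 0")
      case False
      define v where "v k = p1 k + (t / es ! 1) * p0 k" for k
      have ev: "(\<Sum>j<n. N $$ (i,j) * v j) = es ! 1 * v i" if "i < n" for i
      proof -
        have "(\<Sum>j<n. N $$ (i,j) * v j) =
            (\<Sum>j<n. N $$ (i,j) * p1 j) + (t / es ! 1) * (\<Sum>j<n. N $$ (i,j) * p0 j)"
          unfolding v_def by (simp add: algebra_simps sum.distrib sum_distrib_left)
        also have "\<dots> = t * p0 i + es ! 1 * p1 i" using E1[OF that] N0[OF that] by simp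
        also have "\<dots> = es ! 1 * v i" using False unfolding v_def by (simp add: field_simps)
        finally show ?thesis .
      qed
      have "\<not> (\<forall>k<n. v k = 0)"
      proof
        assume "\<forall>k<n. v k = 0"
        hence "\<And>k. k < n \<Longrightarrow> (t / es ! 1) * p0 k + 1 * p1 k = 0" by (simp add: v_def add.commute)
        from indep[OF this] show False by simp
      qed
      then obtain k1 where "k1 < n" "v k1 \<noteq> 0" by blast
      from eigenvalue_below_gap_zero[OF ev this small] False show False by simp
    next
      case True
      define u where "u i = (\<Sum>j<n. N $$ (i,j) * p1 j)" for i
      have u: "u i = t * p0 i" if "i < n" for i using E1[OF that] True unfolding u_def by simp
      have "(\<Sum>i<n. u i * u i) = (\<Sum>j<n. p1 j * (\<Sum>i<n. N $$ (j,i) * u i))"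
        unfolding u_def by (rule sum_sym_mat_swap[OF sym])
      also have "\<dots> = (\<Sum>j<n. p1 j * (t * (\<Sum>i<n. N $$ (j,i) * p0 i)))"
        using u by (intro sum.cong refl) (simp add: sum_distrib_left mult_ac)
      also have "\<dots> = 0" using N0 by simp
      finally have "\<forall>i\<in>{..<n}. u i * u i = 0" by (subst sum_nonneg_eq_0_iff[symmetric]) auto
      then obtain c1 where c1: "\<And>i. i < n \<Longrightarrow> p1 i = c1 * w i"
        using kernel_parallel[of p1] unfolding u_def by auto
      have "c0 \<noteq> 0" using k0 c0 by auto
      thus False using indep[of c1 "- c0"] c0 c1 by simp
    qed
  qed
qed

end

section \<open>Elementary inequalities\<close>

lemma mult_square_diff_le:
  fixes t c :: real assumes "0 \<le> t" "t \<le> c"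
  shows "t * (c - t)^2 \<le> 4 * c^3 / 27"
proof -
  have "4 * c^3 / 27 - t * (c - t)^2 = (c - 3*t)^2 * (4*c - 3*t) / 27"
    by (simp add: power2_eq_square power3_eq_cube algebra_simps)
  also have "\<dots> \<ge> 0" using assms by (intro divide_nonneg_pos mult_nonneg_nonneg) auto
  finally show ?thesis by simp
qed

lemma square_sum_le_card_sum_squares: "(\<Sum>k<L. (a k :: real))^2 \<le> real L * (\<Sum>k<L. (a k)^2)"
proof -
  have "0 \<le> (\<Sum>i<L. \<Sum>j<L. (a i - a j)^2)" by (intro sum_nonneg) auto
  also have "\<dots> = (\<Sum>i<L. \<Sum>j<L. (a i)^2 + (a j)^2 - 2 * (a i * a j))"
    by (intro sum.cong refl) (simp add: power2_eq_square algebra_simps)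
  also have "\<dots> = 2 * real L * (\<Sum>k<L. (a k)^2) - 2 * (\<Sum>k<L. a k)^2"
    by (simp add: sum.distrib sum_subtractf sum_distrib_left sum_distrib_right power2_eq_square mult_ac)
  finally show ?thesis by simp
qed

lemma mult_divide_sqrt:
  fixes d g :: real assumes "0 < d"
  shows "d * (g / sqrt d) = sqrt d * g" "d * (g / sqrt d)^2 = g^2"
proof -
  have "d = sqrt d * sqrt d" "0 < sqrt d" using assms by auto
  thus "d * (g / sqrt d) = sqrt d * g" "d * (g / sqrt d)^2 = g^2"
    by (metis nonzero_mult_div_cancel_left less_irrefl times_divide_eq_right mult.commute,
        simp add: power_divide)
qed

lemma sum_delta_mult:
  assumes "i < (n::nat)" shows "(\<Sum>l<n. (if i = l then c else 0) * h l) = c * (h i :: real)"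
proof -
  have "(\<Sum>l<n. (if i = l then c else 0) * h l) = (\<Sum>l<n. if i = l then c * h l else 0)"
    by (intro sum.cong refl) auto
  thus ?thesis using assms by simp
qed

lemma sum_pos_part_eq_neg_part:
  fixes d f :: "'a \<Rightarrow> real"
  assumes "(\<Sum>i\<in>A. d i * f i) = 0"
  shows "(\<Sum>i\<in>A. d i * max (f i) 0) = (\<Sum>i\<in>A. d i * max (- f i) 0)"
proof -
  have "(\<Sum>i\<in>A. d i * max (f i) 0) - (\<Sum>i\<in>A. d i * max (- f i) 0) = (\<Sum>i\<in>A. d i * f i)"
    by (simp add: sum_subtractf[symmetric] right_diff_distrib[symmetric]) (intro sum.cong refl, auto simp: max_def)
  thus ?thesis using assms by simp
qed

lemma sum_weighted_square_le:
  fixes d f :: "'a \<Rightarrow> real"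
  assumes mean: "(\<Sum>i\<in>A. d i * f i) = 0" and d: "\<And>i. i \<in> A \<Longrightarrow> 0 \<le> d i"
    and f: "\<And>i. i \<in> A \<Longrightarrow> m \<le> f i \<and> f i \<le> M" and "m \<le> 0" "0 \<le> M"
  shows "(\<Sum>i\<in>A. d i * (f i)^2) \<le> (M - m) * (\<Sum>i\<in>A. d i * max (f i) 0)"
proof -
  have "d i * (f i)^2 \<le> M * (d i * max (f i) 0) + (- m) * (d i * max (- f i) 0)" if "i \<in> A" for i
  proof -
    have "(f i)^2 \<le> M * max (f i) 0 + (- m) * max (- f i) 0"
      using f[OF that] assms(4,5) by (cases "0 \<le> f i") (auto simp: power2_eq_square max_def
          intro: mult_right_mono mult_right_mono_neg)
    from mult_left_mono[OF this d[OF that]] show ?thesis by (simp add: algebra_simps)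
  qed
  hence "(\<Sum>i\<in>A. d i * (f i)^2) \<le> M * (\<Sum>i\<in>A. d i * max (f i) 0) + (- m) * (\<Sum>i\<in>A. d i * max (- f i) 0)"
    by (simp add: sum_distrib_left flip: sum.distrib) (rule sum_mono)
  thus ?thesis using sum_pos_part_eq_neg_part[OF mean] by (simp add: algebra_simps)
qed

lemma sum_pos_part_le:
  fixes d f :: "'a \<Rightarrow> real"
  assumes "finite A" "\<And>i. i \<in> A \<Longrightarrow> 0 \<le> d i" "\<And>i. i \<in> A \<Longrightarrow> f i \<le> M" "0 \<le> \<tau>"
  shows "(\<Sum>i\<in>A. d i * max (f i) 0) \<le> \<tau> * (\<Sum>i\<in>A. d i) + M * (\<Sum>i\<in>{i\<in>A. \<tau> < f i}. d i)"
proof -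
  have "(\<Sum>i\<in>A. d i * max (f i) 0) \<le> (\<Sum>i\<in>A. \<tau> * d i + M * (if \<tau> < f i then d i else 0))"
  proof (rule sum_mono)
    fix i assume i: "i \<in> A"
    have bound: "max (f i) 0 \<le> \<tau> + (if \<tau> < f i then M else 0)" using assms(3)[OF i] assms(4) by auto
    show "d i * max (f i) 0 \<le> \<tau> * d i + M * (if \<tau> < f i then d i else 0)"
      using mult_left_mono[OF bound assms(2)[OF i]] by (cases "\<tau> < f i") (simp_all add: algebra_simps)
  qed
  also have "\<dots> = \<tau> * (\<Sum>i\<in>A. d i) + M * (\<Sum>i\<in>{i\<in>A. \<tau> < f i}. d i)"
    using assms(1) by (simp add: sum.distrib sum_distrib_left sum.inter_filter)
  finally show ?thesis .
qed

text \<open>If \<open>x \<le> M V\<close> and \<open>x \<le> M' V'\<close>, then \<open>x\<^sup>2 \<le> (M M') (V V')\<close>, and both products are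
  bounded by AM-GM.\<close>

lemma le_mean_mult_square_mean:
  fixes x M M' V V' p q :: real
  assumes "x \<le> M * V" "x \<le> M' * V'" "0 \<le> M" "0 \<le> M'"
    and "0 \<le> V" "V \<le> p^2" "0 \<le> V'" "V' \<le> q^2" "0 \<le> p" "0 \<le> q"
  shows "x \<le> (M + M') / 2 * ((p + q) / 2)^2"
proof (cases "x \<le> 0")
  case True
  moreover have "0 \<le> (M + M') / 2 * ((p + q) / 2)^2" using assms by simp
  ultimately show ?thesis by linarith
next
  case False
  have "x^2 \<le> (M * V) * (M' * V')"
    using mult_mono[OF assms(1,2)] False assms(3,5) by (simp add: power2_eq_square)
  also have "\<dots> = (M * M') * (V * V')" by (simp add: algebra_simps)
  also have "\<dots> \<le> ((M + M') / 2)^2 * (((p + q) / 2)^2)^2"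
  proof (rule mult_mono)
    show "M * M' \<le> ((M + M') / 2)^2"
      using zero_le_power2[of "M - M'"] by (simp add: power2_eq_square field_simps)
    have "p * q \<le> ((p + q) / 2)^2"
      using zero_le_power2[of "p - q"] by (simp add: power2_eq_square field_simps)
    hence "(p * q)^2 \<le> (((p + q) / 2)^2)^2" using assms(9,10) by (intro power_mono) simp_all
    moreover have "V * V' \<le> (p * q)^2"
      using mult_mono[OF assms(6,8)] assms(7) by (simp add: power_mult_distrib)
    ultimately show "V * V' \<le> (((p + q) / 2)^2)^2" by linarith
    show "0 \<le> V * V'" using assms(5,7) by simp
  qed simp
  also have "\<dots> = ((M + M') / 2 * ((p + q) / 2)^2)^2" by (simp only: power_mult_distrib)
  finally have "x^2 \<le> ((M + M') / 2 * ((p + q) / 2)^2)^2" .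
  moreover have "0 \<le> (M + M') / 2 * ((p + q) / 2)^2" using assms by simp
  ultimately show ?thesis by (rule power2_le_imp_le)
qed

section \<open>Shortest walks in connected graphs\<close>

locale connected_simple_graph =
  fixes n :: nat and E :: "nat \<Rightarrow> nat \<Rightarrow> bool"
  assumes simple: "simple_graph n E" and connected: "connected_graph n E" and two_le_n: "2 \<le> n"
begin

lemma adj_lt: "E i j \<Longrightarrow> i < n \<and> j < n" using simple unfolding simple_graph_def by blast
lemma adj_sym: "E i j \<longleftrightarrow> E j i" using simple unfolding simple_graph_def by blast
lemma adj_irrefl: "\<not> E i i" using simple unfolding simple_graph_def by blast

definition walk :: "(nat \<Rightarrow> nat) \<Rightarrow> nat \<Rightarrow> bool" where
  "walk p L \<longleftrightarrow> (\<forall>k<L. E (p k) (p (Suc k)))"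

lemma walk_vertex_lt: assumes "walk p L" "k \<le> L" "0 < L" shows "p k < n"
proof (cases "k < L")
  case True thus ?thesis using assms adj_lt unfolding walk_def by blast
next
  case False
  hence "k = Suc (L - 1)" using assms by auto
  moreover have "L - 1 < L" using assms(3) by simp
  hence "E (p (L - 1)) (p (Suc (L - 1)))" using assms(1) unfolding walk_def by blast
  ultimately show ?thesis using adj_lt by metis
qed

lemma rtranclp_walk: "E\<^sup>*\<^sup>* x y \<Longrightarrow> \<exists>p L. walk p L \<and> p 0 = x \<and> p L = y"
proof (induction rule: rtranclp_induct)
  case base
  show ?case by (rule exI[of _ "\<lambda>_. x"], rule exI[of _ 0]) (simp add: walk_def)
next
  case (step y z)
  then obtain p L where p: "walk p L" "p 0 = x" "p L = y" by blast
  define q where "q k = (if k \<le> L then p k else z)" for k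
  have "walk q (Suc L)" using p step(2) unfolding q_def walk_def by (auto simp: less_Suc_eq)
  moreover have "q 0 = x" "q (Suc L) = z" using p unfolding q_def by auto
  ultimately show ?case by blast
qed

lemma shortest_walk:
  assumes "x < n" "y < n"
  obtains p L where "walk p L" "p 0 = x" "p L = y"
    "\<And>q L'. walk q L' \<Longrightarrow> q 0 = x \<Longrightarrow> q L' = y \<Longrightarrow> L \<le> L'"
proof -
  let ?P = "\<lambda>(p, L). walk p L \<and> p 0 = x \<and> p L = y"
  have "E\<^sup>*\<^sup>* x y" using connected assms unfolding connected_graph_def by blast
  from rtranclp_walk[OF this] obtain p0 L0 where "?P (p0, L0)" by auto
  then obtain pL where "?P pL" "\<forall>pL'. ?P pL' \<longrightarrow> snd pL \<le> snd pL'"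
    using ex_has_least_nat[where P="?P" and m=snd] by blast
  thus ?thesis using that[of "fst pL" "snd pL"] by (auto split: prod.splits)
qed

lemma walk_splice:
  assumes p: "walk p L" and r: "walk r l" and ij: "i \<le> j" "j \<le> L" and ends: "r 0 = p i" "r l = p j"
  obtains q where "walk q (i + l + (L - j))" "q 0 = p 0" "q (i + l + (L - j)) = p L"
proof -
  define q where "q k = (if k < i then p k else if k \<le> i + l then r (k - i) else p (k - i - l + j))" for k
  have q_tail: "q k = p (k - i - l + j)" if "i + l \<le> k" for k
    using that ends unfolding q_def by (cases "k = i + l") auto
  have "walk q (i + l + (L - j))" unfolding walk_def
  proof (intro allI impI)
    fix k assume k: "k < i + l + (L - j)"
    consider "Suc k < i" | "Suc k = i" | "i \<le> k" "k < i + l" | "i + l \<le> k" by linarith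
    thus "E (q k) (q (Suc k))"
    proof cases
      case 1 thus ?thesis using p ij unfolding walk_def q_def by auto
    next
      case 2 thus ?thesis using p ij ends unfolding walk_def q_def by auto
    next
      case 3
      hence "E (r (k - i)) (r (Suc (k - i)))" using r unfolding walk_def by auto
      thus ?thesis using 3 unfolding q_def by (auto simp: Suc_diff_le)
    next
      case 4
      hence "E (p (k - i - l + j)) (p (Suc (k - i - l + j)))" using p k unfolding walk_def by auto
      thus ?thesis using 4 q_tail[of k] q_tail[of "Suc k"] by (simp add: Suc_diff_le)
    qed
  qed
  moreover have "q 0 = p 0" using ends unfolding q_def by auto
  moreover have "q (i + l + (L - j)) = p L" using q_tail[of "i + l + (L - j)"] ij by simp
  ultimately show ?thesis by (rule that)
qed

context
  fixes p L x y
  assumes walk: "walk p L" and start: "p 0 = x" and target: "p L = y"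
    and shortest: "\<And>q L'. walk q L' \<Longrightarrow> q 0 = x \<Longrightarrow> q L' = y \<Longrightarrow> L \<le> L'"
begin

lemma shortest_walk_segment:
  assumes "walk r l" "i \<le> j" "j \<le> L" "r 0 = p i" "r l = p j"
  shows "j - i \<le> l"
proof -
  obtain q where "walk q (i + l + (L - j))" "q 0 = x" "q (i + l + (L - j)) = y"
    using walk_splice[OF walk assms] start target by metis
  from shortest[OF this] assms(2,3) show ?thesis by linarith
qed

lemma shortest_walk_inj: "inj_on p {0..L}"
proof -
  have "j \<le> i" if "i \<le> j" "j \<le> L" "p i = p j" for i j
    using shortest_walk_segment[of "\<lambda>_. p i" 0 i j] that by (simp add: walk_def)
  thus ?thesis by (intro inj_onI) (metis atLeastAtMost_iff le_antisym nat_le_linear)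
qed

lemma shortest_walk_vertices: "x < n \<Longrightarrow> p ` {0..L} \<subseteq> {..<n}"
  using walk_vertex_lt[OF walk] start by (cases "L = 0") auto

lemma shortest_walk_length_lt: "x < n \<Longrightarrow> L < n"
  using card_mono[OF _ shortest_walk_vertices] card_image[OF shortest_walk_inj] by fastforce

lemma shortest_walk_common_neighbour:
  assumes "E z (p i)" "E z (p j)" "i \<le> j" "j \<le> L"
  shows "j \<le> i + 2"
proof -
  define r where "r k = (if k = 0 then p i else if k = 1 then z else p j)" for k :: nat
  have "walk r 2" using assms adj_sym unfolding walk_def r_def by (auto simp: less_2_cases_iff)
  from shortest_walk_segment[OF this assms(3,4)] show ?thesis unfolding r_def by simp
qed

lemma shortest_walk_neighbours: "card {v \<in> p ` {0..L}. E z v} \<le> 3"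
proof -
  have eq: "{v \<in> p ` {0..L}. E z v} = p ` {k. k \<le> L \<and> E z (p k)}" by auto
  show ?thesis
  proof (cases "{k. k \<le> L \<and> E z (p k)} = {}")
    case True
    show ?thesis unfolding eq True by simp
  next
    case False
  define i0 where "i0 = Min {k. k \<le> L \<and> E z (p k)}"
  have fin: "finite {k. k \<le> L \<and> E z (p k)}" by simp
  have i0: "i0 \<le> L" "E z (p i0)" using Min_in[OF fin False] unfolding i0_def by auto
  have "{k. k \<le> L \<and> E z (p k)} \<subseteq> {i0..i0 + 2}"
    using Min_le[OF fin] shortest_walk_common_neighbour[OF i0(2)] unfolding i0_def[symmetric] by auto
  hence "card {k. k \<le> L \<and> E z (p k)} \<le> card {i0..i0 + 2}" by (intro card_mono) auto
  hence "card (p ` {k. k \<le> L \<and> E z (p k)}) \<le> 3" using card_image_le[OF fin, of p] by simp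
  thus ?thesis unfolding eq .
  qed
qed

end

end

section \<open>Degrees, volumes and the Dirichlet energy\<close>

context connected_simple_graph
begin

definition vol :: "nat set \<Rightarrow> real" where
  "vol S = (\<Sum>i\<in>S. degree n E i)"

definition closed_nbhd :: "nat set \<Rightarrow> nat set" where
  "closed_nbhd S = S \<union> {z. \<exists>x\<in>S. E x z}"

definition energy :: "(nat \<Rightarrow> real) \<Rightarrow> real" where
  "energy f = (\<Sum>a<n. \<Sum>b<n. if E a b then (f a - f b)^2 else 0) / 2"

lemma closed_nbhd_subset: "Z \<subseteq> {..<n} \<Longrightarrow> closed_nbhd Z \<subseteq> {..<n}"
  unfolding closed_nbhd_def by (auto dest: adj_lt)

lemma degree_eq_card: "degree n E i = real (card {j. j < n \<and> E i j})"
proof -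
  have "degree n E i = (\<Sum>j\<in>{j. j < n \<and> E i j}. 1)"
    unfolding degree_def by (rule sum.mono_neutral_cong_right) auto
  thus ?thesis by simp
qed

lemma degree_nonneg: "0 \<le> degree n E i"
  unfolding degree_def by (simp add: sum_nonneg)

lemma vol_nonneg: "0 \<le> vol S"
  unfolding vol_def by (simp add: sum_nonneg degree_nonneg)

lemma degree_ge_1: assumes "i < n" shows "1 \<le> degree n E i"
proof -
  define j where "j = (if i = 0 then 1 else (0::nat))"
  have j: "j < n" "j \<noteq> i" using two_le_n assms unfolding j_def by auto
  have "E\<^sup>*\<^sup>* i j" using connected assms j unfolding connected_graph_def by blast
  then obtain y where "E i y" using j(2) by (cases rule: converse_rtranclpE) auto
  hence "card {j. j < n \<and> E i j} > 0" using adj_lt card_gt_0_iff by fastforce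
  thus ?thesis unfolding degree_eq_card by simp
qed

lemma vol_le: "vol {..<n} \<le> real n ^ 2"
proof -
  have "degree n E i \<le> n" for i
    using card_mono[of "{..<n}" "{j. j < n \<and> E i j}"] unfolding degree_eq_card by auto
  hence "vol {..<n} \<le> (\<Sum>i<n. real n)" unfolding vol_def by (intro sum_mono)
  thus ?thesis by (simp add: power2_eq_square)
qed

lemma vol_le_few_neighbours:
  assumes "finite Q" "\<And>z. card {q\<in>Q. E z q} \<le> k"
  shows "vol Q \<le> real k * real n"
proof -
  have "vol Q = (\<Sum>j<n. \<Sum>q\<in>Q. if E q j then 1 else 0)"
    unfolding vol_def degree_def by (rule sum.swap)
  also have "\<dots> = (\<Sum>j<n. real (card {q\<in>Q. E j q}))"
    using assms(1) adj_sym by (simp add: sum.If_cases Int_def)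
  also have "\<dots> \<le> (\<Sum>j<n. real k)" using assms(2) by (intro sum_mono) simp
  finally show ?thesis by (simp add: mult.commute)
qed

text \<open>A vertex of \<open>Z\<close> outside \<open>Q\<close> has all its neighbours in \<open>closed_nbhd Z - Q\<close>
  or among its at most \<open>k\<close> neighbours in \<open>Q\<close>.\<close>

lemma vol_le_closed_nbhd:
  assumes Q: "finite Q" "\<And>z. card {q\<in>Q. E z q} \<le> k" and Z: "Z \<subseteq> {..<n}"
  defines "c \<equiv> card (closed_nbhd Z - Q)"
  shows "vol Z \<le> real c * (real c + real k - 1) + real k * real n"
proof -
  have finZ: "finite Z" using Z finite_subset by blast
  have fin_nbhd: "finite (closed_nbhd Z - Q)"
    using closed_nbhd_subset[OF Z] by (meson finite_Diff finite_lessThan finite_subset)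
  have ZQ_sub: "Z - Q \<subseteq> closed_nbhd Z - Q" unfolding closed_nbhd_def by auto
  have c_pos: "1 \<le> c" if "x \<in> Z - Q" for x
  proof -
    have "closed_nbhd Z - Q \<noteq> {}" using that ZQ_sub by blast
    thus ?thesis using fin_nbhd unfolding c_def by (simp add: Suc_le_eq card_gt_0_iff)
  qed
  have deg: "degree n E x \<le> real c + real k - 1" if x: "x \<in> Z - Q" for x
  proof -
    have "{j. j < n \<and> E x j} \<subseteq> ((closed_nbhd Z - Q) - {x}) \<union> {q\<in>Q. E x q}"
      using x adj_irrefl unfolding closed_nbhd_def by blast
    hence "card {j. j < n \<and> E x j} \<le> card (((closed_nbhd Z - Q) - {x}) \<union> {q\<in>Q. E x q})"
      using fin_nbhd Q(1) by (intro card_mono finite_UnI) auto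
    also have "\<dots> \<le> card ((closed_nbhd Z - Q) - {x}) + card {q\<in>Q. E x q}" by (rule card_Un_le)
    also have "\<dots> \<le> (c - 1) + k"
      using Q(2)[of x] x ZQ_sub fin_nbhd unfolding c_def by (simp add: card_Diff_singleton subset_iff)
    finally have "real (card {j. j < n \<and> E x j}) \<le> real (c - 1 + k)" by (simp only: of_nat_le_iff)
    thus ?thesis unfolding degree_eq_card using c_pos[OF x] by (simp add: of_nat_diff)
  qed
  have "vol (Z - Q) \<le> real c * (real c + real k - 1)"
  proof (cases "Z - Q = {}")
    case False
    then obtain x where "x \<in> Z - Q" by blast
    hence "0 \<le> real c + real k - 1" using c_pos by fastforce
    moreover have "card (Z - Q) \<le> c" unfolding c_def using fin_nbhd ZQ_sub by (rule card_mono)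
    ultimately have "real (card (Z - Q)) * (real c + real k - 1) \<le> real c * (real c + real k - 1)"
      by (intro mult_right_mono) auto
    moreover have "vol (Z - Q) \<le> real (card (Z - Q)) * (real c + real k - 1)"
      unfolding vol_def using sum_mono[of "Z - Q" "degree n E" "\<lambda>_. real c + real k - 1"] deg by simp
    ultimately show ?thesis by linarith
  next
    case True
    have "0 \<le> real c * (real c + real k - 1)" by (cases c) auto
    thus ?thesis unfolding vol_def True by simp
  qed
  moreover have "vol (Z \<inter> Q) \<le> vol Q"
    unfolding vol_def using Q(1) by (intro sum_mono2) (auto simp: degree_nonneg)
  moreover have "vol Z = vol (Z - Q) + vol (Z \<inter> Q)"
    unfolding vol_def using sum.Int_Diff[OF finZ, of _ Q] by (simp add: add.commute)
  ultimately show ?thesis using vol_le_few_neighbours[OF Q] by linarith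
qed

lemma energy_nonneg: "0 \<le> energy f" unfolding energy_def by (auto intro!: sum_nonneg)

text \<open>An injective walk uses every edge at most once, in each of the two orientations.\<close>

lemma walk_energy_le:
  assumes w: "walk p L" and inj: "inj_on p {0..L}"
  shows "(\<Sum>k<L. (f (p k) - f (p (Suc k)))^2) \<le> energy f"
proof (cases "L = 0")
  case True thus ?thesis using energy_nonneg by simp
next
  case False
  define g where "g e = (if E (fst e) (snd e) then (f (fst e) - f (snd e))^2 else 0)" for e
  define e1 where "e1 k = (p k, p (Suc k))" for k
  define e2 where "e2 k = (p (Suc k), p k)" for k
  have inj1: "inj_on e1 {..<L}" and inj2: "inj_on e2 {..<L}"
    unfolding e1_def e2_def by (auto intro!: inj_onI dest: inj_onD[OF inj])
  have disj: "e1 ` {..<L} \<inter> e2 ` {..<L} = {}"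
  proof (rule ccontr)
    assume "\<not> ?thesis"
    then obtain k l where kl: "k < L" "l < L" "p k = p (Suc l)" "p (Suc k) = p l"
      unfolding e1_def e2_def by auto
    have "k = Suc l" using inj_onD[OF inj kl(3)] kl by auto
    moreover have "Suc k = l" using inj_onD[OF inj kl(4)] kl by auto
    ultimately show False by simp
  qed
  have g1: "g (e1 k) = (f (p k) - f (p (Suc k)))^2" and g2: "g (e2 k) = (f (p k) - f (p (Suc k)))^2"
    if "k < L" for k
    using w that adj_sym unfolding g_def e1_def e2_def walk_def by (auto simp: power2_commute)
  have sub: "e1 ` {..<L} \<union> e2 ` {..<L} \<subseteq> {..<n} \<times> {..<n}"
    using walk_vertex_lt[OF w] False unfolding e1_def e2_def by auto
  have "2 * (\<Sum>k<L. (f (p k) - f (p (Suc k)))^2) = sum g (e1 ` {..<L}) + sum g (e2 ` {..<L})"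
    using g1 g2 by (simp add: sum.reindex[OF inj1] sum.reindex[OF inj2])
  also have "\<dots> = sum g (e1 ` {..<L} \<union> e2 ` {..<L})"
    by (rule sum.union_disjoint[symmetric]) (use disj in auto)
  also have "\<dots> \<le> sum g ({..<n} \<times> {..<n})"
    by (rule sum_mono2[OF _ sub]) (auto simp: g_def)
  also have "\<dots> = 2 * energy f"
    unfolding energy_def g_def sum.cartesian_product by (simp add: split_def)
  finally show ?thesis by simp
qed

lemma walk_diff_sq_le:
  assumes "walk p L" "inj_on p {0..L}"
  shows "(f (p L) - f (p 0))^2 \<le> real L * energy f"
proof -
  have "(f (p L) - f (p 0))^2 = (\<Sum>k<L. f (p (Suc k)) - f (p k))^2"
    using sum_lessThan_telescope[where f="\<lambda>k. f (p k)" and m=L] by simp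
  also have "\<dots> \<le> real L * (\<Sum>k<L. (f (p k) - f (p (Suc k)))^2)"
    using square_sum_le_card_sum_squares[where a="\<lambda>k. f (p (Suc k)) - f (p k)" and L=L]
    by (simp add: power2_commute)
  also have "\<dots> \<le> real L * energy f" using walk_energy_le[OF assms] by (intro mult_left_mono) auto
  finally show ?thesis .
qed

lemma adj_diff_sq_le:
  assumes "E a b" shows "(f a - f b)^2 \<le> energy f"
proof -
  define p where "p (k::nat) = (if k = 0 then a else b)" for k
  have "walk p 1" "inj_on p {0..1}" using assms adj_irrefl unfolding walk_def p_def inj_on_def by auto
  from walk_diff_sq_le[OF this, of f] show ?thesis unfolding p_def by (simp add: power2_commute)
qed

lemma common_neighbour_diff_sq_le:
  assumes "x = z \<or> E x z" "y = z \<or> E y z"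
  shows "(f x - f y)^2 \<le> 4 * energy f"
proof -
  have "(f x - f z)^2 \<le> energy f" "(f y - f z)^2 \<le> energy f"
    using assms adj_diff_sq_le energy_nonneg by auto
  hence "2 * ((f x - f z)^2 + (f y - f z)^2) \<le> 4 * energy f" by simp
  moreover have "(f x - f y)^2 \<le> 2 * ((f x - f z)^2 + (f y - f z)^2)"
    using zero_le_power2[of "f x + f y - 2 * f z"] by (simp add: power2_eq_square algebra_simps)
  ultimately show ?thesis by linarith
qed

text \<open>Vertices whose values differ by more than \<open>2 \<surd>(energy f)\<close> are at distance at least 3,
  so their closed neighbourhoods are disjoint; together with a set \<open>Q\<close> that no vertex sees
  more than three times, this bounds both volumes.\<close>

lemma vol_separated_sets:
  assumes Q: "Q \<subseteq> {..<n}" "\<And>z. card {q\<in>Q. E z q} \<le> 3"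
    and X: "X \<subseteq> {..<n}" and Y: "Y \<subseteq> {..<n}"
    and far: "\<And>x y. x \<in> X \<Longrightarrow> y \<in> Y \<Longrightarrow> 4 * energy f < (f x - f y)^2"
  obtains a b :: nat where "a + b + card Q \<le> n"
    "vol X \<le> real a * (real a + 2) + 3 * real n" "vol Y \<le> real b * (real b + 2) + 3 * real n"
proof -
  have finQ: "finite Q" using Q(1) finite_subset by blast
  have disj: "closed_nbhd X \<inter> closed_nbhd Y = {}"
  proof (rule ccontr)
    assume "closed_nbhd X \<inter> closed_nbhd Y \<noteq> {}"
    then obtain z x y where "x \<in> X" "y \<in> Y" "x = z \<or> E x z" "y = z \<or> E y z"
      unfolding closed_nbhd_def by blast
    thus False using far common_neighbour_diff_sq_le[of x z y f] by fastforce
  qed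
  define A where "A = closed_nbhd X - Q"
  define B where "B = closed_nbhd Y - Q"
  have sub: "A \<subseteq> {..<n}" "B \<subseteq> {..<n}"
    unfolding A_def B_def using closed_nbhd_subset X Y by blast+
  hence fin: "finite A" "finite B" using finite_subset by blast+
  have "A \<inter> B = {}" "(A \<union> B) \<inter> Q = {}" using disj unfolding A_def B_def by blast+
  hence "card A + card B + card Q = card (A \<union> B \<union> Q)" using fin finQ by (simp add: card_Un_disjoint)
  also have "\<dots> \<le> n" using card_mono[of "{..<n}" "A \<union> B \<union> Q"] sub Q(1) by simp
  finally have "card A + card B + card Q \<le> n" .
  moreover have "vol X \<le> real (card A) * (real (card A) + 2) + 3 * real n"
    using vol_le_closed_nbhd[OF finQ Q(2) X] unfolding A_def by (simp add: add.commute)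
  moreover have "vol Y \<le> real (card B) * (real (card B) + 2) + 3 * real n"
    using vol_le_closed_nbhd[OF finQ Q(2) Y] unfolding B_def by (simp add: add.commute)
  ultimately show ?thesis by (rule that)
qed

end

section \<open>The variational bound\<close>

context connected_simple_graph
begin

lemma extremal_vertices:
  fixes f :: "nat \<Rightarrow> real"
  obtains u v where "u < n" "v < n" "\<And>i. i < n \<Longrightarrow> f v \<le> f i \<and> f i \<le> f u"
proof -
  have "0 \<in> {..<n}" using two_le_n by simp
  hence ne: "f ` {..<n} \<noteq> {}" by blast
  obtain u where "u < n" "f u = Max (f ` {..<n})" using Max_in[OF _ ne] by auto
  moreover obtain v where "v < n" "f v = Min (f ` {..<n})" using Min_in[OF _ ne] by auto
  ultimately show ?thesis using that by simp
qed

lemma mean_zero_sign: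
  assumes mean: "(\<Sum>i<n. degree n E i * f i) = 0"
    and ext: "\<And>i. i < n \<Longrightarrow> f v \<le> f i \<and> f i \<le> f u"
  shows "f v \<le> 0" "0 \<le> f u"
proof -
  have pos: "0 < degree n E i" if "i < n" for i using degree_ge_1[OF that] by simp
  have "0 \<in> {..<n}" using two_le_n by simp
  hence ne: "{..<n} \<noteq> {}" by blast
  show "f v \<le> 0"
  proof (rule ccontr)
    assume "\<not> f v \<le> 0"
    hence "0 < degree n E i * f i" if "i < n" for i using ext[OF that] pos[OF that] by simp
    hence "0 < (\<Sum>i<n. degree n E i * f i)" using ne by (intro sum_pos) auto
    thus False using mean by simp
  qed
  show "0 \<le> f u"
  proof (rule ccontr)
    assume "\<not> 0 \<le> f u"
    hence "0 < degree n E i * - f i" if "i < n" for i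
      using ext[OF that] pos[OF that] by (simp add: mult_pos_neg)
    hence "0 < (\<Sum>i<n. degree n E i * - f i)" using ne by (intro sum_pos) auto
    thus False using mean by (simp add: sum_negf)
  qed
qed

text \<open>When the energy is small compared with the oscillation \<open>R = max f - min f\<close>, the level
  sets \<open>{f > \<epsilon> R}\<close> and \<open>{f < - \<epsilon> R}\<close> are far apart and have small volume; by the
  mean-zero condition each of them bounds the positive mass of \<open>f\<close>.\<close>

lemma pos_part_le_separated:
  fixes f :: "nat \<Rightarrow> real"
  assumes mean: "(\<Sum>i<n. degree n E i * f i) = 0"
    and u: "u < n" and ext: "\<And>i. i < n \<Longrightarrow> f v \<le> f i \<and> f i \<le> f u"
    and walk: "walk p L" "p 0 = u" "p L = v"
    and shortest: "\<And>q L'. walk q L' \<Longrightarrow> q 0 = u \<Longrightarrow> q L' = v \<Longrightarrow> L \<le> L'"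
    and eps: "0 < \<epsilon>" and small: "energy f < \<epsilon>^2 * (f u - f v)^2"
  shows "(\<Sum>i<n. degree n E i * max (f i) 0) \<le> \<epsilon> * (f u - f v) * vol {..<n}
           + (f u - f v) / 2 * ((real n + 1 + 2 * sqrt (3 * real n) - real L) / 2)^2"
proof -
  define \<tau> where "\<tau> = \<epsilon> * (f u - f v)"
  define \<sigma> where "\<sigma> = sqrt (3 * real n)"
  define P where "P = (\<Sum>i<n. degree n E i * max (f i) 0)"
  define X where "X = {i\<in>{..<n}. \<tau> < f i}"
  define Y where "Y = {i\<in>{..<n}. \<tau> < - f i}"
  define Q where "Q = p ` {0..L}"
  have sign: "f v \<le> 0" "0 \<le> f u" using mean_zero_sign[OF mean ext] by auto
  have \<tau>: "0 \<le> \<tau>" using eps sign unfolding \<tau>_def by auto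
  have \<sigma>: "0 \<le> \<sigma>" "\<sigma>^2 = 3 * real n" unfolding \<sigma>_def by auto
  have far: "4 * energy f < (f x - f y)^2" if "x \<in> X" "y \<in> Y" for x y
  proof -
    have "(2 * \<tau>)^2 < (f x - f y)^2" using that \<tau> unfolding X_def Y_def by (intro power_strict_mono) auto
    thus ?thesis using small unfolding \<tau>_def by (simp add: power_mult_distrib)
  qed
  have card_Q: "card Q = L + 1"
    unfolding Q_def using card_image[OF shortest_walk_inj[OF walk shortest]] by simp
  have "Q \<subseteq> {..<n}" unfolding Q_def by (rule shortest_walk_vertices[OF walk shortest u])
  moreover have "card {q\<in>Q. E z q} \<le> 3" for z
    unfolding Q_def by (rule shortest_walk_neighbours[OF walk shortest])
  moreover have "X \<subseteq> {..<n}" "Y \<subseteq> {..<n}" unfolding X_def Y_def by auto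
  ultimately obtain a b where ab: "a + b + card Q \<le> n"
    and vol_X: "vol X \<le> real a * (real a + 2) + 3 * real n"
    and vol_Y: "vol Y \<le> real b * (real b + 2) + 3 * real n"
    using vol_separated_sets[OF _ _ _ _ far] by blast
  have vol_sq: "real c * (real c + 2) + 3 * real n \<le> (real c + 1 + \<sigma>)^2" for c
    using \<sigma> by (simp add: power2_eq_square algebra_simps)
  have "P - \<tau> * vol {..<n} \<le> (f u + - f v) / 2 * ((real a + 1 + \<sigma> + (real b + 1 + \<sigma>)) / 2)^2"
  proof (rule le_mean_mult_square_mean)
    have "P \<le> \<tau> * vol {..<n} + f u * vol X"
      unfolding P_def vol_def X_def using ext \<tau> by (intro sum_pos_part_le) (auto simp: degree_nonneg)
    thus "P - \<tau> * vol {..<n} \<le> f u * vol X" by linarith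
    have "P \<le> \<tau> * vol {..<n} + (- f v) * vol Y"
      unfolding P_def vol_def Y_def sum_pos_part_eq_neg_part[OF mean] using ext \<tau>
      by (intro sum_pos_part_le) (auto simp: degree_nonneg)
    thus "P - \<tau> * vol {..<n} \<le> - f v * vol Y" by linarith
    show "vol X \<le> (real a + 1 + \<sigma>)^2" using vol_X vol_sq[of a] by linarith
    show "vol Y \<le> (real b + 1 + \<sigma>)^2" using vol_Y vol_sq[of b] by linarith
  qed (use sign \<sigma> vol_nonneg in auto)
  also have "\<dots> \<le> (f u - f v) / 2 * ((real n + 1 + 2 * \<sigma> - real L) / 2)^2"
  proof -
    have "real (a + b + (L + 1)) \<le> real n" using ab card_Q by simp
    hence "((real a + 1 + \<sigma> + (real b + 1 + \<sigma>)) / 2)^2 \<le> ((real n + 1 + 2 * \<sigma> - real L) / 2)^2"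
      using \<sigma> by (intro power_mono) auto
    thus ?thesis using sign by (simp add: mult_left_mono)
  qed
  finally show ?thesis unfolding P_def \<tau>_def \<sigma>_def by simp
qed

lemma weighted_square_le_separated:
  fixes f :: "nat \<Rightarrow> real"
  assumes mean: "(\<Sum>i<n. degree n E i * f i) = 0"
    and u: "u < n" and ext: "\<And>i. i < n \<Longrightarrow> f v \<le> f i \<and> f i \<le> f u"
    and walk: "walk p L" "p 0 = u" "p L = v"
    and shortest: "\<And>q L'. walk q L' \<Longrightarrow> q 0 = u \<Longrightarrow> q L' = v \<Longrightarrow> L \<le> L'"
    and eps: "0 < \<epsilon>" and small: "energy f < \<epsilon>^2 * (f u - f v)^2"
  shows "(\<Sum>i<n. degree n E i * (f i)^2)
           \<le> (f u - f v)^2 * (\<epsilon> * real n ^ 2 + (real n + 1 + 2 * sqrt (3 * real n) - real L)^2 / 8)"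
proof -
  define R where "R = f u - f v"
  define W where "W = real n + 1 + 2 * sqrt (3 * real n) - real L"
  have sign: "f v \<le> 0" "0 \<le> f u" using mean_zero_sign[OF mean ext] by auto
  have "(\<Sum>i<n. degree n E i * (f i)^2) \<le> R * (\<Sum>i<n. degree n E i * max (f i) 0)"
    using sum_weighted_square_le[OF mean, of "f v" "f u"] ext sign degree_nonneg
    unfolding R_def by fastforce
  also have "\<dots> \<le> R * (\<epsilon> * R * vol {..<n} + R / 2 * (W / 2)^2)"
    using pos_part_le_separated[OF mean u ext walk shortest eps small] sign
    unfolding R_def W_def by (intro mult_left_mono) auto
  also have "\<dots> = R^2 * (\<epsilon> * vol {..<n} + W^2 / 8)" by (simp add: power2_eq_square algebra_simps)
  also have "\<dots> \<le> R^2 * (\<epsilon> * real n ^ 2 + W^2 / 8)"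
    using vol_le eps by (intro mult_left_mono add_mono) auto
  finally show ?thesis unfolding R_def W_def .
qed

theorem energy_ge_weighted_square:
  fixes f :: "nat \<Rightarrow> real"
  assumes eps: "0 < \<epsilon>" and B: "0 \<le> B" "B * real n ^ 2 \<le> \<epsilon>^2"
    "B * (\<epsilon> * real n ^ 3 + (real n + 1 + 2 * sqrt (3 * real n))^3 / 54) \<le> 1"
    and mean: "(\<Sum>i<n. degree n E i * f i) = 0"
  shows "B * (\<Sum>i<n. degree n E i * (f i)^2) \<le> energy f"
proof -
  define S where "S = (\<Sum>i<n. degree n E i * (f i)^2)"
  define K where "K = 1 + 2 * sqrt (3 * real n)"
  obtain u v where u: "u < n" and v: "v < n" and ext: "\<And>i. i < n \<Longrightarrow> f v \<le> f i \<and> f i \<le> f u"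
    using extremal_vertices[of f] by blast
  obtain p L where walk: "walk p L" "p 0 = u" "p L = v"
    and shortest: "\<And>q L'. walk q L' \<Longrightarrow> q 0 = u \<Longrightarrow> q L' = v \<Longrightarrow> L \<le> L'"
    using shortest_walk[OF u v] by blast
  have sign: "f v \<le> 0" "0 \<le> f u" using mean_zero_sign[OF mean ext] by auto
  show ?thesis
  proof (cases "\<epsilon>^2 * (f u - f v)^2 \<le> energy f")
    case True
    have "(f i)^2 \<le> (f u - f v)^2" if "i < n" for i
      using ext[OF that] sign by (intro power2_le_iff_abs_le[THEN iffD2]) (auto simp: abs_le_iff)
    hence "S \<le> (\<Sum>i<n. degree n E i * (f u - f v)^2)"
      unfolding S_def by (intro sum_mono mult_left_mono) (auto simp: degree_nonneg)
    also have "\<dots> = (f u - f v)^2 * vol {..<n}" by (simp add: vol_def sum_distrib_right mult.commute)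
    also have "\<dots> \<le> (f u - f v)^2 * real n ^ 2" by (intro mult_left_mono vol_le) simp
    finally have "B * S \<le> B * ((f u - f v)^2 * real n ^ 2)" using B(1) by (rule mult_left_mono)
    also have "\<dots> = (f u - f v)^2 * (B * real n ^ 2)" by (simp add: mult_ac)
    also have "\<dots> \<le> (f u - f v)^2 * \<epsilon>^2" using B(2) by (simp add: mult_left_mono)
    finally show ?thesis using True unfolding S_def by (simp add: mult.commute)
  next
    case False
    have "L < n" using shortest_walk_length_lt[OF walk(1-3)] shortest u by blast
    hence L_n: "real L \<le> real n + K" unfolding K_def using real_sqrt_ge_zero[of "3 * real n"] by linarith
    have "S \<le> (f u - f v)^2 * (\<epsilon> * real n ^ 2 + (real n + K - real L)^2 / 8)"
      using weighted_square_le_separated[OF mean u ext walk shortest eps] False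
      unfolding S_def K_def by (simp add: add.assoc)
    also have "\<dots> \<le> (real L * energy f) * (\<epsilon> * real n ^ 2 + (real n + K - real L)^2 / 8)"
      using walk_diff_sq_le[where f=f, OF walk(1) shortest_walk_inj[OF walk shortest]] walk eps
      by (intro mult_right_mono) (auto simp: power2_commute)
    also have "\<dots> = energy f * (\<epsilon> * real L * real n ^ 2 + real L * (real n + K - real L)^2 / 8)"
      by (simp add: algebra_simps)
    also have "\<dots> \<le> energy f * (\<epsilon> * real n ^ 3 + (real n + K)^3 / 54)"
    proof (intro mult_left_mono energy_nonneg add_mono)
      show "\<epsilon> * real L * real n ^ 2 \<le> \<epsilon> * real n ^ 3"
        using \<open>L < n\<close> eps
        by (simp add: power3_eq_cube power2_eq_square mult_right_mono)
      show "real L * (real n + K - real L)^2 / 8 \<le> (real n + K)^3 / 54"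
        using mult_square_diff_le[OF of_nat_0_le_iff L_n] by simp
    qed
    finally have "B * S \<le> B * (energy f * (\<epsilon> * real n ^ 3 + (real n + K)^3 / 54))"
      using B(1) by (rule mult_left_mono)
    also have "\<dots> = energy f * (B * (\<epsilon> * real n ^ 3 + (real n + K)^3 / 54))" by (simp add: mult_ac)
    also have "\<dots> \<le> energy f" using mult_left_mono[OF B(3) energy_nonneg] unfolding K_def by (simp add: add.assoc)
    finally show ?thesis unfolding S_def .
  qed
qed

end

section \<open>The normalized Laplacian\<close>

context connected_simple_graph
begin

lemma norm_laplacian_carrier: "norm_laplacian n E \<in> carrier_mat n n"
  unfolding norm_laplacian_def deg_inv_sqrt_def adj_matrix_def by auto

lemma norm_laplacian_entry:
  assumes i: "i < n" and j: "j < n"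
  shows "norm_laplacian n E $$ (i,j) = (if i = j then 1 else 0)
           - (if E i j then 1 else 0) / (sqrt (degree n E i) * sqrt (degree n E j))"
proof -
  define D where "D = deg_inv_sqrt n E"
  define A where "A = adj_matrix n E"
  have D: "D \<in> carrier_mat n n" and A: "A \<in> carrier_mat n n"
    unfolding D_def A_def deg_inv_sqrt_def adj_matrix_def by auto
  have D_entry: "D $$ (k,l) = (if k = l then 1 / sqrt (degree n E k) else 0)" if "k < n" "l < n" for k l
    using that unfolding D_def deg_inv_sqrt_def by simp
  have DA: "(D * A) $$ (i,k) = (if E i k then 1 else 0) / sqrt (degree n E i)" if k: "k < n" for k
  proof -
    have "(D * A) $$ (i,k) = (\<Sum>l<n. (if i = l then 1 / sqrt (degree n E i) else 0) * (if E l k then 1 else 0))"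
      using mult_mat_nth_sum[OF D A i k] i k D_entry unfolding A_def adj_matrix_def
      by (auto intro!: sum.cong)
    also have "\<dots> = (if E i k then 1 else 0) / sqrt (degree n E i)" using sum_delta_mult[OF i] by simp
    finally show ?thesis .
  qed
  have "(D * A * D) $$ (i,j) = (\<Sum>k<n. (if j = k then 1 / sqrt (degree n E j) else 0)
                                  * ((if E i k then 1 else 0) / sqrt (degree n E i)))"
    using mult_mat_nth_sum[OF mult_carrier_mat[OF D A] D i j] j D_entry DA
    by (auto simp: mult.commute intro!: sum.cong)
  also have "\<dots> = 1 / sqrt (degree n E j) * ((if E i j then 1 else 0) / sqrt (degree n E i))"
    by (rule sum_delta_mult[OF j])
  also have "\<dots> = (if E i j then 1 else 0) / (sqrt (degree n E i) * sqrt (degree n E j))" by simp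
  finally show ?thesis
    unfolding norm_laplacian_def D_def[symmetric] A_def[symmetric] using i j D A by simp
qed

lemma norm_laplacian_sym: "i < n \<Longrightarrow> j < n \<Longrightarrow> norm_laplacian n E $$ (i,j) = norm_laplacian n E $$ (j,i)"
  by (simp add: norm_laplacian_entry adj_sym[of i j] mult.commute)

lemma norm_laplacian_sqrt_degree:
  assumes i: "i < n"
  shows "(\<Sum>j<n. norm_laplacian n E $$ (i,j) * sqrt (degree n E j)) = 0"
proof -
  have nz: "degree n E j \<noteq> 0" if "j < n" for j using degree_ge_1[OF that] by simp
  have "(\<Sum>j<n. norm_laplacian n E $$ (i,j) * sqrt (degree n E j))
      = (\<Sum>j<n. (if i = j then sqrt (degree n E j) else 0) - (if E i j then 1 else 0) / sqrt (degree n E i))"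
    using i nz[OF i] by (intro sum.cong refl) (simp add: norm_laplacian_entry nz field_simps)
  also have "\<dots> = sqrt (degree n E i) - degree n E i / sqrt (degree n E i)"
    using i by (simp add: sum_subtractf degree_def flip: sum_divide_distrib)
  also have "\<dots> = 0" using degree_ge_1[OF i] by (simp add: field_simps)
  finally show ?thesis .
qed

lemma energy_eq:
  "energy f = (\<Sum>i<n. degree n E i * (f i)^2) - (\<Sum>i<n. \<Sum>j<n. (if E i j then 1 else 0) * (f i * f j))"
proof -
  define c where "c a b = (if E a b then 1 else (0::real))" for a b
  have "(\<Sum>a<n. \<Sum>b<n. if E a b then (f a - f b)^2 else 0)
      = (\<Sum>a<n. \<Sum>b<n. c a b * (f a)^2 + c a b * (f b)^2 - 2 * (c a b * (f a * f b)))"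
    unfolding c_def by (intro sum.cong refl) (auto simp: power2_eq_square algebra_simps)
  also have "\<dots> = (\<Sum>a<n. \<Sum>b<n. c a b * (f a)^2) + (\<Sum>a<n. \<Sum>b<n. c a b * (f b)^2)
        - 2 * (\<Sum>a<n. \<Sum>b<n. c a b * (f a * f b))"
    by (simp only: sum.distrib sum_subtractf sum_distrib_left)
  also have "(\<Sum>a<n. \<Sum>b<n. c a b * (f b)^2) = (\<Sum>b<n. \<Sum>a<n. c a b * (f b)^2)" by (rule sum.swap)
  also have "\<dots> = (\<Sum>b<n. degree n E b * (f b)^2)"
    unfolding c_def degree_def using adj_sym by (simp add: sum_distrib_right)
  also have "(\<Sum>a<n. \<Sum>b<n. c a b * (f a)^2) = (\<Sum>a<n. degree n E a * (f a)^2)"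
    unfolding c_def degree_def by (simp add: sum_distrib_right)
  finally show ?thesis unfolding energy_def c_def by simp
qed

lemma norm_laplacian_quadratic_form:
  "(\<Sum>i<n. g i * (\<Sum>j<n. norm_laplacian n E $$ (i,j) * g j)) = energy (\<lambda>i. g i / sqrt (degree n E i))"
proof -
  define f where "f i = g i / sqrt (degree n E i)" for i
  have sq: "degree n E i * (f i)^2 = (g i)^2" if "i < n" for i
    using mult_divide_sqrt degree_ge_1[OF that] unfolding f_def by simp
  have "(\<Sum>i<n. g i * (\<Sum>j<n. norm_laplacian n E $$ (i,j) * g j))
      = (\<Sum>i<n. \<Sum>j<n. (if i = j then g i * g j else 0) - (if E i j then 1 else 0) * (f i * f j))"
    unfolding sum_distrib_left
    by (intro sum.cong refl) (auto simp: norm_laplacian_entry f_def algebra_simps)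
  also have "\<dots> = (\<Sum>i<n. (g i)^2) - (\<Sum>i<n. \<Sum>j<n. (if E i j then 1 else 0) * (f i * f j))"
    by (simp add: sum_subtractf power2_eq_square)
  also have "\<dots> = energy f" unfolding energy_eq using sq by simp
  finally show ?thesis unfolding f_def .
qed

theorem lambda1_ge:
  assumes "0 < B"
    and bound: "\<And>f. (\<Sum>i<n. degree n E i * f i) = 0 \<Longrightarrow> B * (\<Sum>i<n. degree n E i * (f i)^2) \<le> energy f"
  shows "B \<le> lambda1 n E"
proof -
  interpret spectral_gap "norm_laplacian n E" n "\<lambda>i. sqrt (degree n E i)" B
  proof
    fix g :: "nat \<Rightarrow> real"
    assume mean: "(\<Sum>i<n. sqrt (degree n E i) * g i) = 0"
    define f where "f i = g i / sqrt (degree n E i)" for i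
    have "degree n E i * f i = sqrt (degree n E i) * g i" "degree n E i * (f i)^2 = (g i)^2" if "i < n" for i
      using mult_divide_sqrt degree_ge_1[OF that] unfolding f_def by simp_all
    hence "(\<Sum>i<n. degree n E i * f i) = 0" "(\<Sum>i<n. degree n E i * (f i)^2) = (\<Sum>i<n. (g i)^2)"
      using mean by simp_all
    thus "B * (\<Sum>i<n. (g i)^2) \<le> (\<Sum>i<n. g i * (\<Sum>j<n. norm_laplacian n E $$ (i,j) * g j))"
      using bound unfolding norm_laplacian_quadratic_form f_def by metis
  qed (use assms norm_laplacian_carrier norm_laplacian_sym norm_laplacian_sqrt_degree in auto)
  show ?thesis unfolding lambda1_def using second_eigenvalue_ge_gap[OF two_le_n] .
qed

end

section \<open>The asymptotic bound\<close>

definition gap_bound :: "nat \<Rightarrow> real" where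
  "gap_bound n = 1 / (real n ^ 3 / sqrt (sqrt (real n)) + (real n + 1 + 2 * sqrt (3 * real n))^3 / 54)"

text \<open>The parameter \<open>\<epsilon> = n\<^sup>-\<^sup>1\<^sup>/\<^sup>4\<close> makes the first term of the bound negligible.\<close>

lemma (in connected_simple_graph) gap_bound_le_lambda1: "gap_bound n \<le> lambda1 n E"
proof (rule lambda1_ge)
  define t where "t = sqrt (sqrt (real n))"
  define D where "D = real n ^ 3 / t + (real n + 1 + 2 * sqrt (3 * real n))^3 / 54"
  have n: "2 \<le> real n" using two_le_n by simp
  have "t^4 = (t^2)^2" by (simp flip: power_mult)
  hence t: "1 \<le> t" "t^4 = real n" unfolding t_def using n by auto
  have D: "real n ^ 3 / t \<le> D" "0 < D" unfolding D_def using n t by (auto intro!: add_pos_nonneg)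
  have gap: "gap_bound n = 1 / D" unfolding gap_bound_def D_def t_def ..
  show "0 < gap_bound n" using gap D by simp
  fix f :: "nat \<Rightarrow> real"
  assume mean: "(\<Sum>i<n. degree n E i * f i) = 0"
  show "gap_bound n * (\<Sum>i<n. degree n E i * (f i)^2) \<le> energy f"
  proof (rule energy_ge_weighted_square[OF _ _ _ _ mean])
    have "1 / D \<le> 1 / (real n ^ 3 / t)" using D n t by (intro divide_left_mono) auto
    hence "gap_bound n * real n ^ 2 \<le> 1 / (real n ^ 3 / t) * real n ^ 2"
      unfolding gap by (intro mult_right_mono) auto
    also have "\<dots> = 1 / t^3" using t n by (simp add: field_simps power4_eq_xxxx power3_eq_cube power2_eq_square)
    also have "\<dots> \<le> (1 / t)^2" using t by (simp add: power_divide frac_le power_increasing)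
    finally show "gap_bound n * real n ^ 2 \<le> (1 / t)^2" .
    show "gap_bound n * (1 / t * real n ^ 3 + (real n + 1 + 2 * sqrt (3 * real n))^3 / 54) \<le> 1"
      unfolding gap D_def using D by simp
  qed (use t gap D in auto)
qed

lemma gap_bound_le_alpha:
  assumes "2 \<le> n" shows "gap_bound n \<le> alpha n"
proof -
  define K where "K i j = (i < n \<and> j < n \<and> i \<noteq> j)" for i j
  have "simple_graph n K" unfolding simple_graph_def K_def by auto
  moreover have "connected_graph n K"
    unfolding connected_graph_def by (metis K_def r_into_rtranclp rtranclp.rtrancl_refl)
  moreover have "gap_bound n \<le> lambda1 n E" if "simple_graph n E" "connected_graph n E" for E
    using connected_simple_graph.gap_bound_le_lambda1 that assms by (simp add: connected_simple_graph_def)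
  ultimately show ?thesis unfolding alpha_def by (intro cInf_greatest) auto
qed

lemma gap_bound_asymptotic: "(\<lambda>n. gap_bound n * real n ^ 3 / 54 - 1) \<longlonglongrightarrow> 0"
proof -
  have "((\<lambda>x::real. 1 / (x ^ 3 / sqrt (sqrt x) + (x + 1 + 2 * sqrt (3 * x))^3 / 54) * x ^ 3 / 54 - 1)
          \<longlongrightarrow> 0) at_top"
    by real_asymp
  from filterlim_compose[OF this filterlim_real_sequentially]
  show ?thesis unfolding gap_bound_def by (simp add: o_def)
qed

theorem claim3p3:
  shows "\<exists>g :: nat \<Rightarrow> real. (g \<longlonglongrightarrow> 0) \<and>
           (\<forall>\<^sub>F n in sequentially. alpha n \<ge> (1 + g n) * 54 / real n ^ 3)"
proof (intro exI conjI)
  show "(\<lambda>n. gap_bound n * real n ^ 3 / 54 - 1) \<longlonglongrightarrow> 0" by (rule gap_bound_asymptotic)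
  show "\<forall>\<^sub>F n in sequentially. alpha n \<ge> (1 + (gap_bound n * real n ^ 3 / 54 - 1)) * 54 / real n ^ 3"
    using eventually_ge_at_top[of 2]
  proof eventually_elim
    case (elim n)
    thus ?case using gap_bound_le_alpha[OF elim] by simp
  qed
qed

end
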